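(* Let $3\le h\le n-1$ and let $G$ be a connected graph $D$-cospectral to $K^{h}_{n}$. Then $G$ contains no induced subgraph isomorphic to any of the graphs $C_4$, $C_5$, $H_1$, $H_4$, $H_9$, $H_{10}$, $H_{11}$, $H_{12}$, $H_{13}$, where: $H_1$ is the path $a\!-\!b\!-\!c\!-\!d$ together with a vertex $e$ adjacent to all of $a,b,c,d$; $H_4$ has vertices $a,b,c,d,e$ and edges $ab,bc,ad,bd,be,de$ (a $K_4$ minus an edge, with a pendant vertex $c$ attached to one of its two vertices of degree $3$); $H_9$ is $K_2\vee P_3$ (an edge whose two ends are both joined to every vertex of a path on $3$ vertices); $H_{10}$ is $K_2\vee \overline{K_3}$ (an edge whose two ends are both joined to each of $3$ pairwise non-adjacent vertices); $H_{11}$ is $K_5$ together with one extra vertex adjacent to exactly two vertices of the $K_5$; $H_{12}$ is $K_2\vee 2K_2$ (an edge whose two ends are both joined to every vertex of two disjoint edges); $H_{13}$ consists of two triangles sharing exactly one vertex $b$, together with a pendant vertex adjacent to $b$.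
   Context: For a connected graph $G$, the distance matrix $D(G)$ has as $(i,j)$-entry the distance between the $i$-th and $j$-th vertices; two graphs are $D$-cospectral if their distance matrices have the same spectrum. $K^{h}_{n}$ denotes the graph on $n$ vertices obtained from $K_h$ by attaching $n-h$ pendant edges to one vertex of $K_h$. $G_1\vee G_2$ denotes the join (complete product) of $G_1$ and $G_2$; $\overline{K_3}$ is the edgeless graph on $3$ vertices; $2K_2$ is two disjoint edges. *)

theory Defs
  imports Main "Jordan_Normal_Form.Char_Poly"
begin

definition simple_graph :: "nat \<Rightarrow> (nat \<Rightarrow> nat \<Rightarrow> bool) \<Rightarrow> bool" where
  "simple_graph n E \<longleftrightarrow> (\<forall>i j. E i j \<longrightarrow> i < n \<and> j < n) \<and>
     (\<forall>i j. E i j \<longrightarrow> E j i) \<and> (\<forall>i. \<not> E i i)"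

fun has_walk :: "(nat \<Rightarrow> nat \<Rightarrow> bool) \<Rightarrow> nat \<Rightarrow> nat \<Rightarrow> nat \<Rightarrow> bool" where
  "has_walk E 0 u v = (u = v)"
| "has_walk E (Suc k) u v = (\<exists>w. E u w \<and> has_walk E k w v)"

definition connected_graph :: "nat \<Rightarrow> (nat \<Rightarrow> nat \<Rightarrow> bool) \<Rightarrow> bool" where
  "connected_graph n E \<longleftrightarrow> (\<forall>u<n. \<forall>v<n. \<exists>k. has_walk E k u v)"

definition gdist :: "(nat \<Rightarrow> nat \<Rightarrow> bool) \<Rightarrow> nat \<Rightarrow> nat \<Rightarrow> nat" where
  "gdist E u v = (LEAST k. has_walk E k u v)"

definition dist_matrix :: "nat \<Rightarrow> (nat \<Rightarrow> nat \<Rightarrow> bool) \<Rightarrow> real mat" where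
  "dist_matrix n E = mat n n (\<lambda>(i, j). real (gdist E i j))"

text \<open>D-cospectral: the distance matrices have the same spectrum (with
  multiplicities), i.e. the same characteristic polynomial.\<close>
definition D_cospectral ::
  "nat \<Rightarrow> (nat \<Rightarrow> nat \<Rightarrow> bool) \<Rightarrow> nat \<Rightarrow> (nat \<Rightarrow> nat \<Rightarrow> bool) \<Rightarrow> bool" where
  "D_cospectral n E m F \<longleftrightarrow> char_poly (dist_matrix n E) = char_poly (dist_matrix m F)"

text \<open>K^h_n: clique on {0..<h}, vertices h..n-1 pendant at vertex 0.\<close>
definition Khn :: "nat \<Rightarrow> nat \<Rightarrow> nat \<Rightarrow> nat \<Rightarrow> bool" where
  "Khn h n i j \<longleftrightarrow> i \<noteq> j \<and> i < n \<and> j < n \<and>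
     ((i < h \<and> j < h) \<or> (i = 0 \<and> h \<le> j) \<or> (j = 0 \<and> h \<le> i))"

definition graph_of_edges :: "(nat \<times> nat) list \<Rightarrow> nat \<Rightarrow> nat \<Rightarrow> bool" where
  "graph_of_edges es i j \<longleftrightarrow> (i, j) \<in> set es \<or> (j, i) \<in> set es"

definition has_induced :: "nat \<Rightarrow> (nat \<Rightarrow> nat \<Rightarrow> bool) \<Rightarrow> nat \<Rightarrow> (nat \<Rightarrow> nat \<Rightarrow> bool) \<Rightarrow> bool" where
  "has_induced n E m H \<longleftrightarrow> (\<exists>f. inj_on f {..<m} \<and> f ` {..<m} \<subseteq> {..<n} \<and>
      (\<forall>i<m. \<forall>j<m. E (f i) (f j) \<longleftrightarrow> H i j))"

definition C4 where "C4 = graph_of_edges [(0,1),(1,2),(2,3),(3,0)]"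
definition C5 where "C5 = graph_of_edges [(0,1),(1,2),(2,3),(3,4),(4,0)]"
text \<open>H1: path a-b-c-d (0-1-2-3) plus e=4 adjacent to all.\<close>
definition H1 where "H1 = graph_of_edges [(0,1),(1,2),(2,3),(4,0),(4,1),(4,2),(4,3)]"
text \<open>H4: a=0,b=1,c=2,d=3,e=4; edges ab,bc,ad,bd,be,de.\<close>
definition H4 where "H4 = graph_of_edges [(0,1),(1,2),(0,3),(1,3),(1,4),(3,4)]"
text \<open>H9 = K2 join P3: K2 = {0,1}, P3 = 2-3-4.\<close>
definition H9 where "H9 = graph_of_edges
  [(0,1),(2,3),(3,4),(0,2),(0,3),(0,4),(1,2),(1,3),(1,4)]"
definition H10 where "H10 = graph_of_edges [(0,1),(0,2),(0,3),(0,4),(1,2),(1,3),(1,4)]"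
text \<open>H11 = K5 on {0..4} plus vertex 5 adjacent to 0 and 1.\<close>
definition H11 where "H11 = graph_of_edges
  [(0,1),(0,2),(0,3),(0,4),(1,2),(1,3),(1,4),(2,3),(2,4),(3,4),(5,0),(5,1)]"
text \<open>H12 = K2 join 2K2: K2 = {0,1}, 2K2 = {2,3},{4,5}.\<close>
definition H12 where "H12 = graph_of_edges
  [(0,1),(2,3),(4,5),(0,2),(0,3),(0,4),(0,5),(1,2),(1,3),(1,4),(1,5)]"
text \<open>H13: triangles 0-1-2 and 0-3-4 sharing b=0, pendant 5 at 0.\<close>
definition H13 where "H13 = graph_of_edges [(0,1),(1,2),(2,0),(0,3),(3,4),(4,0),(0,5)]"

end

theory Submission
  imports Defs "Jordan_Normal_Form.Schur_Decomposition"
begin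

text \<open>The quadratic form of \<open>D(K\<^sup>h\<^sub>n)\<close> is explicit. On the common kernel of one or two
  linear forms it is at most \<open>-1/2\<close>, resp. \<open>-1\<close>, times the squared norm, and at least \<open>-2\<close>
  times it, so \<open>\<lambda>\<^sub>2 \<le> -1/2\<close>, \<open>\<lambda>\<^sub>3 \<le> -1\<close> and the second smallest eigenvalue is \<open>\<ge> -2\<close>.
  Each forbidden graph \<open>H\<close> has diameter 2, so an induced copy of \<open>H\<close> makes \<open>D(H)\<close> a principal
  submatrix of \<open>D(G)\<close>, and an explicit subspace of dimension 2 or 3 shows that \<open>D(H)\<close>, hence
  \<open>D(G)\<close>, violates one of these bounds. Cospectral symmetric matrices are orthogonally similar,
  so \<open>D(K\<^sup>h\<^sub>n)\<close> would violate it as well, contradicting the Courant--Fischer dimension count.\<close>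

section \<open>Real symmetric matrices are orthogonally diagonalizable\<close>

lemma conjugate_real_vec [simp]: "conjugate (v :: real vec) = v"
  by (intro eq_vecI) (auto simp: conjugate_real_def)

lemma orthonormal_mat_of_normalized_cols:
  fixes ws :: "real vec list"
  assumes ws: "set ws \<subseteq> carrier_vec n" "corthogonal ws" "length ws = n"
  defines "W \<equiv> mat_of_cols n (map (\<lambda>w. (1 / sqrt (w \<bullet> w)) \<cdot>\<^sub>v w) ws)"
  shows "W \<in> carrier_mat n n" and "W\<^sup>T * W = 1\<^sub>m n"
proof -
  show W: "W \<in> carrier_mat n n" unfolding W_def using ws by auto
  have wsi: "ws ! i \<in> carrier_vec n" if "i < n" for i using ws that by auto
  have pos: "ws ! i \<bullet> ws ! i > 0" if i: "i < n" for i
  proof -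
    have "ws ! i \<bullet> ws ! i \<noteq> 0" using corthogonalD[OF ws(2), of i i] ws(3) i by simp
    moreover have "ws ! i \<bullet> ws ! i \<ge> 0" unfolding scalar_prod_def by (intro sum_nonneg) auto
    ultimately show ?thesis by linarith
  qed
  have "col W i \<bullet> col W j = (if i = j then 1 else 0)" if i: "i < n" and j: "j < n" for i j
  proof (cases "i = j")
    case True
    then show ?thesis using i ws pos[OF i] wsi[OF i]
      by (simp add: W_def smult_scalar_prod_distrib scalar_prod_smult_distrib field_simps)
  next
    case False
    then have "ws ! i \<bullet> ws ! j = 0" using corthogonalD[OF ws(2), of i j] ws(3) i j by simp
    then show ?thesis using False i j ws wsi[OF i] wsi[OF j]
      by (simp add: W_def smult_scalar_prod_distrib scalar_prod_smult_distrib)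
  qed
  then show "W\<^sup>T * W = 1\<^sub>m n" using W by (intro eq_matI) auto
qed

lemma orthonormal_basis_extending:
  fixes v :: "real vec"
  assumes v: "v \<in> carrier_vec n" and v0: "v \<noteq> 0\<^sub>v n"
  shows "\<exists>W \<in> carrier_mat n n. W\<^sup>T * W = 1\<^sub>m n \<and> (\<exists>c. col W 0 = c \<cdot>\<^sub>v v)"
proof -
  interpret cof_vec_space n "TYPE(real)" .
  have n0: "n \<noteq> 0" using v v0 by auto
  define b where "b = basis_completion v"
  from basis_completion[OF v v0, folded b_def]
  have dist_b: "distinct b" and indep: "\<not> lin_dep (set b)" and b: "set b \<subseteq> carrier_vec n"
    and len_b: "length b = n" and hd_b: "hd b = v" by auto
  from len_b n0 hd_b obtain vs where bv: "b = v # vs" by (cases b) auto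
  define ws where "ws = gram_schmidt n b"
  from gram_schmidt_result[OF b dist_b indep ws_def]
  have ws: "set ws \<subseteq> carrier_vec n" "corthogonal ws" "length ws = n" by (auto simp: len_b)
  have hd_ws: "hd ws = v" using gram_schmidt_hd[OF v, of vs] unfolding ws_def bv .
  define W where "W = mat_of_cols n (map (\<lambda>w. (1 / sqrt (w \<bullet> w)) \<cdot>\<^sub>v w) ws)"
  note W = orthonormal_mat_of_normalized_cols[OF ws, folded W_def]
  have "col W 0 = (1 / sqrt (v \<bullet> v)) \<cdot>\<^sub>v v"
    using ws hd_ws n0 unfolding W_def by (cases ws) auto
  then show ?thesis using W by blast
qed

lemma orthogonal_conj_symmetric_eigenvector_block:
  fixes A W :: "real mat"
  assumes A: "A \<in> carrier_mat n n" and sym: "A\<^sup>T = A"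
    and W: "W \<in> carrier_mat n n" and WTW: "W\<^sup>T * W = 1\<^sub>m n"
    and n0: "0 < n" and eig: "A *\<^sub>v col W 0 = e \<cdot>\<^sub>v col W 0"
  shows "\<exists>A' \<in> carrier_mat (n - 1) (n - 1). A'\<^sup>T = A' \<and>
    W\<^sup>T * A * W = four_block_mat (mat 1 1 (\<lambda>_. e)) (0\<^sub>m 1 (n - 1)) (0\<^sub>m (n - 1) 1) A'"
proof -
  define B where "B = W\<^sup>T * A * W"
  have B: "B \<in> carrier_mat n n" unfolding B_def using W A by auto
  have "B\<^sup>T = (W\<^sup>T * (A * W))\<^sup>T"
    unfolding B_def using W A by (simp add: assoc_mult_mat[of _ n n _ n _ n])
  also have "\<dots> = (A * W)\<^sup>T * W" using W A by (simp add: transpose_mult[of _ n n _ n])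
  also have "\<dots> = B" unfolding B_def using W A sym by (simp add: transpose_mult[of _ n n _ n])
  finally have symB: "B\<^sup>T = B" .
  have col0: "B $$ (i, 0) = (if i = 0 then e else 0)" if i: "i < n" for i
  proof -
    have "B $$ (i, 0) = (W\<^sup>T * (A * W)) $$ (i, 0)"
      unfolding B_def using W A by (simp add: assoc_mult_mat[of _ n n _ n _ n])
    also have "\<dots> = row (W\<^sup>T) i \<bullet> col (A * W) 0" using W A i n0 by simp
    also have "row (W\<^sup>T) i = col W i" using W i by simp
    also have "col (A * W) 0 = A *\<^sub>v col W 0" by (rule col_mult2[OF A W]) (use n0 in simp)
    also have "col W i \<bullet> (A *\<^sub>v col W 0) = e * (col W i \<bullet> col W 0)"
      unfolding eig using W i by (simp add: scalar_prod_smult_distrib)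
    also have "col W i \<bullet> col W 0 = (W\<^sup>T * W) $$ (i, 0)" using W i n0 by simp
    finally show ?thesis using WTW i n0 by simp
  qed
  have B_sym: "B $$ (j, i) = B $$ (i, j)" if "i < n" "j < n" for i j
    using arg_cong[OF symB, of "\<lambda>M. M $$ (i, j)"] B that by simp
  have row0: "B $$ (0, j) = (if j = 0 then e else 0)" if j: "j < n" for j
    using col0[OF j] B_sym[OF n0 j] by simp
  define A' where "A' = mat (n - 1) (n - 1) (\<lambda>(i, j). B $$ (Suc i, Suc j))"
  have "A'\<^sup>T = A'" using B_sym by (intro eq_matI) (auto simp: A'_def)
  moreover have "B = four_block_mat (mat 1 1 (\<lambda>_. e)) (0\<^sub>m 1 (n - 1)) (0\<^sub>m (n - 1) 1) A'"
    using B n0 col0 row0 by (intro eq_matI) (auto simp: A'_def)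
  ultimately show ?thesis unfolding B_def by (intro bexI[of _ A']) (auto simp: A'_def)
qed

lemma block_diag_conj:
  fixes Q B :: "'a :: comm_ring_1 mat"
  assumes a: "a \<in> carrier_mat 1 1" and Q: "Q \<in> carrier_mat m m" and B: "B \<in> carrier_mat m m"
  defines "P \<equiv> four_block_mat (1\<^sub>m 1) (0\<^sub>m 1 m) (0\<^sub>m m 1) Q"
  shows "P\<^sup>T * four_block_mat a (0\<^sub>m 1 m) (0\<^sub>m m 1) B * P =
    four_block_mat a (0\<^sub>m 1 m) (0\<^sub>m m 1) (Q\<^sup>T * B * Q)"
proof -
  have PT: "P\<^sup>T = four_block_mat (1\<^sub>m 1) (0\<^sub>m 1 m) (0\<^sub>m m 1) Q\<^sup>T"
    unfolding P_def using Q by (simp add: transpose_four_block_mat[of _ 1 1 _ m _ m])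
  have "P\<^sup>T * four_block_mat a (0\<^sub>m 1 m) (0\<^sub>m m 1) B = four_block_mat a (0\<^sub>m 1 m) (0\<^sub>m m 1) (Q\<^sup>T * B)"
    unfolding PT using mult_four_block_mat[of "1\<^sub>m 1" 1 1 "0\<^sub>m 1 m" m "0\<^sub>m m 1" m "Q\<^sup>T" a 1 "0\<^sub>m 1 m" m "0\<^sub>m m 1" B] a Q B
    by simp
  also have "\<dots> * P = four_block_mat a (0\<^sub>m 1 m) (0\<^sub>m m 1) (Q\<^sup>T * B * Q)"
    unfolding P_def using mult_four_block_mat[of a 1 1 "0\<^sub>m 1 m" m "0\<^sub>m m 1" m "Q\<^sup>T * B" "1\<^sub>m 1" 1 "0\<^sub>m 1 m" m "0\<^sub>m m 1" Q] a Q B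
    by simp
  finally show ?thesis .
qed

lemma block_diag_orthogonal:
  fixes Q :: "'a :: comm_ring_1 mat"
  assumes Q: "Q \<in> carrier_mat m m" and QTQ: "Q\<^sup>T * Q = 1\<^sub>m m"
  defines "P \<equiv> four_block_mat (1\<^sub>m 1) (0\<^sub>m 1 m) (0\<^sub>m m 1) Q"
  shows "P\<^sup>T * P = 1\<^sub>m (Suc m)"
proof -
  have P: "P \<in> carrier_mat (Suc m) (Suc m)" unfolding P_def using Q by auto
  have "P\<^sup>T * P = P\<^sup>T * four_block_mat (1\<^sub>m 1) (0\<^sub>m 1 m) (0\<^sub>m m 1) (1\<^sub>m m) * P"
    using P by simp
  also have "\<dots> = 1\<^sub>m (Suc m)"
    unfolding P_def block_diag_conj[OF one_carrier_mat Q one_carrier_mat] using Q QTQ by simp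
  finally show ?thesis .
qed

lemma symmetric_deflation:
  fixes A :: "real mat"
  assumes A: "A \<in> carrier_mat n n" and sym: "A\<^sup>T = A" and n0: "0 < n"
    and cp: "char_poly A = [:- e, 1:] * p"
  shows "\<exists>W \<in> carrier_mat n n. \<exists>A' \<in> carrier_mat (n - 1) (n - 1).
    W\<^sup>T * W = 1\<^sub>m n \<and> A'\<^sup>T = A' \<and> char_poly A' = p \<and>
    W\<^sup>T * A * W = four_block_mat (mat 1 1 (\<lambda>_. e)) (0\<^sub>m 1 (n - 1)) (0\<^sub>m (n - 1) 1) A'"
proof -
  have "eigenvalue A e" unfolding eigenvalue_root_char_poly[OF A] cp by simp
  then have "eigenvector A (find_eigenvector A e) e" by (rule find_eigenvector[OF A])
  then obtain v where v: "v \<in> carrier_vec n" "v \<noteq> 0\<^sub>v n" and Av: "A *\<^sub>v v = e \<cdot>\<^sub>v v"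
    using A unfolding eigenvector_def by auto
  obtain W c where W: "W \<in> carrier_mat n n" and WTW: "W\<^sup>T * W = 1\<^sub>m n"
    and col: "col W 0 = c \<cdot>\<^sub>v v"
    using orthonormal_basis_extending[OF v] by blast
  have "A *\<^sub>v col W 0 = e \<cdot>\<^sub>v col W 0"
    unfolding col using A v Av by (simp add: mult_mat_vec smult_smult_assoc mult.commute)
  from orthogonal_conj_symmetric_eigenvector_block[OF A sym W WTW n0 this]
  obtain A' where A': "A' \<in> carrier_mat (n - 1) (n - 1)" and symA': "A'\<^sup>T = A'"
    and blk: "W\<^sup>T * A * W = four_block_mat (mat 1 1 (\<lambda>_. e)) (0\<^sub>m 1 (n - 1)) (0\<^sub>m (n - 1) 1) A'"
    by blast
  have "W * W\<^sup>T = 1\<^sub>m n" using mat_mult_left_right_inverse[OF _ W WTW] W by auto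
  then have "similar_mat (W\<^sup>T * A * W) A"
    using A W WTW by (intro similar_matI[of _ _ "W\<^sup>T" W n]) auto
  then have "char_poly A = char_poly (W\<^sup>T * A * W)" by (simp add: char_poly_similar)
  also have "\<dots> = char_poly (mat 1 1 (\<lambda>_. e)) * char_poly A'"
    unfolding blk by (rule char_poly_four_block_zeros_col) (use A' in auto)
  finally have "[:- e, 1:] * char_poly A' = [:- e, 1:] * p"
    using cp by (simp add: char_poly_defs det_def sign_def)
  then have "char_poly A' = p" by (metis mult_cancel_left pCons_eq_0_iff zero_neq_one)
  then show ?thesis using W WTW A' symA' blk by blast
qed

lemma symmetric_orthogonally_diagonalizable:
  fixes A :: "real mat"
  assumes "A \<in> carrier_mat n n" and "A\<^sup>T = A" and "char_poly A = (\<Prod>e\<leftarrow>es. [:- e, 1:])"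
  shows "\<exists>Q \<in> carrier_mat n n. Q\<^sup>T * Q = 1\<^sub>m n \<and> Q\<^sup>T * A * Q = mat_diag n (\<lambda>i. es ! i)"
  using assms
proof (induction es arbitrary: n A)
  case Nil
  then have "n = 0" using degree_monic_char_poly[of A n] by simp
  then show ?case by (intro bexI[of _ "1\<^sub>m n"]) (auto simp: mat_diag_def intro!: eq_matI)
next
  case (Cons e es n A)
  note A = Cons.prems(1)
  have "degree (char_poly A) = Suc (length es)"
    unfolding Cons.prems(3) using degree_linear_factors[of uminus "e # es"] by simp
  then have n0: "0 < n" using degree_monic_char_poly[OF A] by auto
  obtain W A' where W: "W \<in> carrier_mat n n" and A': "A' \<in> carrier_mat (n - 1) (n - 1)"
    and WTW: "W\<^sup>T * W = 1\<^sub>m n" and symA': "A'\<^sup>T = A'" and cp: "char_poly A' = (\<Prod>e\<leftarrow>es. [:- e, 1:])"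
    and blk: "W\<^sup>T * A * W = four_block_mat (mat 1 1 (\<lambda>_. e)) (0\<^sub>m 1 (n - 1)) (0\<^sub>m (n - 1) 1) A'"
    using symmetric_deflation[OF A Cons.prems(2) n0 Cons.prems(3)[unfolded list.map prod_list.Cons]]
    by blast
  obtain Q' where Q': "Q' \<in> carrier_mat (n - 1) (n - 1)" and Q'TQ': "Q'\<^sup>T * Q' = 1\<^sub>m (n - 1)"
    and diag: "Q'\<^sup>T * A' * Q' = mat_diag (n - 1) (\<lambda>i. es ! i)"
    using Cons.IH[OF A' symA' cp] by blast
  define P where "P = four_block_mat (1\<^sub>m 1) (0\<^sub>m 1 (n - 1)) (0\<^sub>m (n - 1) 1) Q'"
  have P: "P \<in> carrier_mat n n" unfolding P_def using Q' n0 by auto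
  have "P\<^sup>T * P = 1\<^sub>m n" using block_diag_orthogonal[OF Q' Q'TQ'] n0 by (simp add: P_def)
  moreover have "(W * P)\<^sup>T * (W * P) = P\<^sup>T * (W\<^sup>T * W) * P"
    using W P by (simp add: transpose_mult assoc_mult_mat[of _ n n _ n _ n])
  ultimately have "(W * P)\<^sup>T * (W * P) = 1\<^sub>m n" using P WTW by simp
  moreover have "(W * P)\<^sup>T * A * (W * P) = P\<^sup>T * (W\<^sup>T * A * W) * P"
    using W P A by (simp add: transpose_mult assoc_mult_mat[of _ n n _ n _ n])
  moreover have "\<dots> = mat_diag n (\<lambda>i. (e # es) ! i)"
    unfolding blk P_def block_diag_conj[OF mat_carrier Q' A'] diag using n0
    by (intro eq_matI) (auto simp: mat_diag_def nth_Cons')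
  ultimately show ?case using W P by (intro bexI[of _ "W * P"]) auto
qed

lemma symmetric_hermitian_form_real:
  fixes A :: "real mat" and v :: "complex vec"
  assumes A: "A \<in> carrier_mat n n" and sym: "A\<^sup>T = A"
  defines "s \<equiv> \<Sum>i<n. \<Sum>j<n. cnj (v $ i) * of_real (A $$ (i, j)) * v $ j"
  shows "cnj s = s"
proof -
  have "cnj s = (\<Sum>i<n. \<Sum>j<n. v $ i * of_real (A $$ (i, j)) * cnj (v $ j))"
    unfolding s_def by simp
  also have "\<dots> = (\<Sum>j<n. \<Sum>i<n. v $ i * of_real (A $$ (i, j)) * cnj (v $ j))"
    by (rule sum.swap)
  also have "\<dots> = s" unfolding s_def
  proof (intro sum.cong refl)
    fix i j assume "i \<in> {..<n}" "j \<in> {..<n}"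
    then have "A $$ (j, i) = A $$ (i, j)" using arg_cong[OF sym, of "\<lambda>M. M $$ (i, j)"] A by simp
    then show "v $ j * of_real (A $$ (j, i)) * cnj (v $ i) = cnj (v $ i) * of_real (A $$ (i, j)) * v $ j"
      by simp
  qed
  finally show ?thesis .
qed

lemma symmetric_eigenvalue_real:
  fixes A :: "real mat" and a :: complex
  assumes A: "A \<in> carrier_mat n n" and sym: "A\<^sup>T = A"
    and root: "poly (char_poly (map_mat of_real A)) a = 0"
  shows "a \<in> \<real>"
proof -
  let ?C = "map_mat (of_real :: real \<Rightarrow> complex) A"
  have C: "?C \<in> carrier_mat n n" using A by simp
  have "eigenvalue ?C a" using eigenvalue_root_char_poly[OF C] root by simp
  from find_eigenvector[OF C this] obtain v where "eigenvector ?C v a" by blast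
  then have v: "v \<in> carrier_vec n" and v0: "v \<noteq> 0\<^sub>v n" and Cv: "?C *\<^sub>v v = a \<cdot>\<^sub>v v"
    using C unfolding eigenvector_def by auto
  define N where "N = (\<Sum>i<n. cnj (v $ i) * v $ i)"
  have row: "(\<Sum>j<n. of_real (A $$ (i, j)) * v $ j) = a * v $ i" if i: "i < n" for i
    using arg_cong[OF Cv, of "\<lambda>w. w $ i"] i A v by (simp add: scalar_prod_def lessThan_atLeast0)
  have "(\<Sum>i<n. \<Sum>j<n. cnj (v $ i) * of_real (A $$ (i, j)) * v $ j)
      = (\<Sum>i<n. cnj (v $ i) * (\<Sum>j<n. of_real (A $$ (i, j)) * v $ j))"
    by (simp add: sum_distrib_left mult.assoc)
  also have "\<dots> = (\<Sum>i<n. cnj (v $ i) * (a * v $ i))" by (simp add: row)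
  also have "\<dots> = a * N" unfolding N_def sum_distrib_left by (simp add: ac_simps)
  finally have aN: "cnj (a * N) = a * N" using symmetric_hermitian_form_real[OF A sym, of v] by metis
  have "cnj (v $ i) * v $ i = of_real ((cmod (v $ i))\<^sup>2)" for i
    by (simp only: complex_norm_square mult.commute)
  then have N_real: "N = of_real (\<Sum>i<n. (cmod (v $ i))\<^sup>2)" unfolding N_def of_real_sum by simp
  obtain i where i: "i < n" "v $ i \<noteq> 0" using v v0 by (metis eq_vecI carrier_vecD index_zero_vec)
  have "(\<Sum>i<n. (cmod (v $ i))\<^sup>2) > 0" by (rule sum_pos2[of _ i]) (use i in auto)
  then have "N \<noteq> 0" and "cnj N = N" unfolding N_real by (metis of_real_eq_0_iff less_irrefl, simp)
  with aN have "cnj a = a" by (metis complex_cnj_mult mult_cancel_right)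
  then show ?thesis by (metis Reals_cnj_iff)
qed

lemma symmetric_char_poly_real_factors:
  fixes A :: "real mat"
  assumes A: "A \<in> carrier_mat n n" and symA: "A\<^sup>T = A"
  shows "\<exists>es. char_poly A = (\<Prod>e\<leftarrow>es. [:- e, 1:])"
proof -
  let ?C = "map_mat (of_real :: real \<Rightarrow> complex) A"
  interpret map_poly_inj_comm_ring_hom "of_real :: real \<Rightarrow> complex" by unfold_locales auto
  obtain as where as: "char_poly ?C = (\<Prod>a\<leftarrow>as. [:- a, 1:])"
    using char_poly_factorized[of ?C n] A by auto
  have real: "of_real (Re a) = a" if "a \<in> set as" for a
  proof -
    have "poly (char_poly ?C) a = 0" unfolding as using that
      by (simp add: poly_prod_list prod_list_zero_iff)
    then show ?thesis using symmetric_eigenvalue_real[OF A symA] by (simp add: complex_is_Real_iff)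
  qed
  have "map_poly of_real (char_poly A) = char_poly ?C"
    by (rule sym[OF of_real_hom.char_poly_hom[OF A]])
  also have "\<dots> = (\<Prod>a\<leftarrow>as. [:- of_real (Re a), 1:])"
    unfolding as by (rule arg_cong[of _ _ prod_list], rule map_cong) (auto simp: real)
  also have "\<dots> = map_poly of_real (\<Prod>e\<leftarrow>map Re as. [:- e, 1:])"
  proof (induction as)
    case (Cons a as)
    interpret map_poly_comm_ring_hom "of_real :: real \<Rightarrow> complex" ..
    show ?case using Cons by (simp only: list.map prod_list.Cons hom_mult) simp
  qed simp
  finally have "char_poly A = (\<Prod>e\<leftarrow>map Re as. [:- e, 1:])" by (simp only: eq_iff)
  then show ?thesis by blast
qed

lemma cospectral_symmetric_orthogonally_similar:
  fixes A B :: "real mat"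
  assumes A: "A \<in> carrier_mat n n" and B: "B \<in> carrier_mat n n"
    and symA: "A\<^sup>T = A" and symB: "B\<^sup>T = B" and cp: "char_poly A = char_poly B"
  shows "\<exists>R \<in> carrier_mat n n. R\<^sup>T * R = 1\<^sub>m n \<and> R\<^sup>T * B * R = A"
proof -
  obtain es where es: "char_poly A = (\<Prod>e\<leftarrow>es. [:- e, 1:])"
    using symmetric_char_poly_real_factors[OF A symA] by blast
  obtain P where P: "P \<in> carrier_mat n n" and PTP: "P\<^sup>T * P = 1\<^sub>m n"
    and PA: "P\<^sup>T * A * P = mat_diag n (\<lambda>i. es ! i)"
    using symmetric_orthogonally_diagonalizable[OF A symA es] by blast
  obtain Q where Q: "Q \<in> carrier_mat n n" and QTQ: "Q\<^sup>T * Q = 1\<^sub>m n"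
    and QB: "Q\<^sup>T * B * Q = mat_diag n (\<lambda>i. es ! i)"
    using symmetric_orthogonally_diagonalizable[OF B symB] cp es by metis
  have PPT: "P * P\<^sup>T = 1\<^sub>m n" using mat_mult_left_right_inverse[OF _ P PTP] P by auto
  define R where "R = Q * P\<^sup>T"
  have R: "R \<in> carrier_mat n n" unfolding R_def using P Q by auto
  have "R\<^sup>T * R = P * (Q\<^sup>T * Q) * P\<^sup>T"
    unfolding R_def using P Q by (simp add: transpose_mult assoc_mult_mat[of _ n n _ n _ n])
  then have "R\<^sup>T * R = 1\<^sub>m n" using P QTQ PPT by simp
  moreover have "R\<^sup>T * B * R = P * (Q\<^sup>T * B * Q) * P\<^sup>T"
    unfolding R_def using P Q B by (simp add: transpose_mult assoc_mult_mat[of _ n n _ n _ n])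
  moreover have "P * (P\<^sup>T * A * P) * P\<^sup>T = (P * P\<^sup>T) * A * (P * P\<^sup>T)"
    using P A by (simp add: assoc_mult_mat[of _ n n _ n _ n])
  ultimately show ?thesis using R A PPT unfolding QB PA[symmetric] by auto
qed

section \<open>Quadratic forms on spans and kernels\<close>

definition quad_form :: "nat \<Rightarrow> real mat \<Rightarrow> (nat \<Rightarrow> real) \<Rightarrow> real" where
  "quad_form n M x = (\<Sum>i<n. \<Sum>j<n. M $$ (i, j) * x i * x j)"

definition sq_norm :: "nat \<Rightarrow> (nat \<Rightarrow> real) \<Rightarrow> real" where
  "sq_norm n x = (\<Sum>i<n. x i * x i)"

definition shifted_form :: "real \<Rightarrow> real \<Rightarrow> nat \<Rightarrow> real mat \<Rightarrow> (nat \<Rightarrow> real) \<Rightarrow> real" where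
  "shifted_form s t n M x = s * (quad_form n M x - t * sq_norm n x)"

definition lin_comb :: "nat \<Rightarrow> (nat \<Rightarrow> nat \<Rightarrow> real) \<Rightarrow> (nat \<Rightarrow> real) \<Rightarrow> nat \<Rightarrow> real" where
  "lin_comb k u c i = (\<Sum>j<k. c j * u j i)"

text \<open>For \<open>s = 1\<close>, \<open>pos_on_span s t n M k u\<close> says that \<open>M - t I\<close> is positive definite on
  the span of \<open>u 0, \<dots>, u (k - 1)\<close>, so that \<open>M\<close> has \<open>k\<close> eigenvalues \<open>> t\<close>, and
  \<open>nonpos_on_kernel s t n M l w\<close> says that \<open>M - t I\<close> is negative semidefinite on the common
  kernel of \<open>l\<close> linear forms, so that \<open>M\<close> has at most \<open>l\<close> eigenvalues \<open>> t\<close>.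
  For \<open>s = -1\<close> the same holds for eigenvalues \<open>< t\<close>.\<close>
definition pos_on_span ::
    "real \<Rightarrow> real \<Rightarrow> nat \<Rightarrow> real mat \<Rightarrow> nat \<Rightarrow> (nat \<Rightarrow> nat \<Rightarrow> real) \<Rightarrow> bool" where
  "pos_on_span s t n M k u \<longleftrightarrow>
     (\<forall>c. (\<exists>j<k. c j \<noteq> 0) \<longrightarrow> 0 < shifted_form s t n M (lin_comb k u c))"

definition nonpos_on_kernel ::
    "real \<Rightarrow> real \<Rightarrow> nat \<Rightarrow> real mat \<Rightarrow> nat \<Rightarrow> (nat \<Rightarrow> nat \<Rightarrow> real) \<Rightarrow> bool" where
  "nonpos_on_kernel s t n M l w \<longleftrightarrow>
     (\<forall>x. (\<forall>i<l. (\<Sum>j<n. w i j * x j) = 0) \<longrightarrow> shifted_form s t n M x \<le> 0)"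

lemma shifted_form_cong:
  "(\<And>i. i < n \<Longrightarrow> x i = y i) \<Longrightarrow> shifted_form s t n M x = shifted_form s t n M y"
  by (simp add: shifted_form_def quad_form_def sq_norm_def)

lemma underdetermined_homogeneous_system:
  fixes a :: "nat \<Rightarrow> nat \<Rightarrow> real"
  assumes "l < k"
  shows "\<exists>c. (\<exists>j<k. c j \<noteq> 0) \<and> (\<forall>i<l. (\<Sum>j<k. a i j * c j) = 0)"
proof -
  define M where "M = mat\<^sub>r k k (\<lambda>i. if i = k - 1 then 0\<^sub>v k else vec k (a i))"
  have M: "M \<in> carrier_mat k k" unfolding M_def by simp
  have "det M = 0" unfolding M_def by (rule det_row_0) (use assms in auto)
  then obtain v where v: "v \<in> carrier_vec k" "v \<noteq> 0\<^sub>v k" and Mv: "M *\<^sub>v v = 0\<^sub>v k"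
    using det_0_iff_vec_prod_zero[OF M] by blast
  have "\<exists>j<k. v $ j \<noteq> 0" using v by (metis eq_vecI carrier_vecD index_zero_vec)
  moreover have "(\<Sum>j<k. a i j * v $ j) = 0" if "i < l" for i
  proof -
    have "i < k" "i \<noteq> k - 1" using that assms by linarith+
    then show ?thesis using arg_cong[OF Mv, of "\<lambda>w. w $ i"] v
      by (simp add: M_def scalar_prod_def lessThan_atLeast0)
  qed
  ultimately show ?thesis by blast
qed

text \<open>A \<open>k\<close>-dimensional space meets the common kernel of \<open>l < k\<close> linear forms nontrivially.\<close>
lemma pos_on_span_nonpos_on_kernel_contra:
  assumes pos: "pos_on_span s t n M k u" and nonpos: "nonpos_on_kernel s t n M l w" and "l < k"
  shows False
proof -
  obtain c where c: "\<exists>j<k. c j \<noteq> 0"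
    and ker: "\<forall>i<l. (\<Sum>j<k. (\<Sum>p<n. w i p * u j p) * c j) = 0"
    using underdetermined_homogeneous_system[OF \<open>l < k\<close>, of "\<lambda>i j. \<Sum>p<n. w i p * u j p"] by blast
  have "(\<Sum>p<n. w i p * lin_comb k u c p) = (\<Sum>j<k. (\<Sum>p<n. w i p * u j p) * c j)" for i
  proof -
    have "(\<Sum>p<n. w i p * lin_comb k u c p) = (\<Sum>p<n. \<Sum>j<k. w i p * (c j * u j p))"
      unfolding lin_comb_def by (simp add: sum_distrib_left)
    also have "\<dots> = (\<Sum>j<k. \<Sum>p<n. w i p * (c j * u j p))" by (rule sum.swap)
    finally show ?thesis by (simp add: sum_distrib_left sum_distrib_right ac_simps)
  qed
  then have "shifted_form s t n M (lin_comb k u c) \<le> 0"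
    using nonpos ker unfolding nonpos_on_kernel_def by simp
  with pos c show False unfolding pos_on_span_def by force
qed

lemma quad_form_vec: "M \<in> carrier_mat n n \<Longrightarrow> quad_form n M x = vec n x \<bullet> (M *\<^sub>v vec n x)"
  unfolding quad_form_def by (simp add: scalar_prod_def sum_distrib_left lessThan_atLeast0 ac_simps)

lemma sq_norm_vec: "sq_norm n x = vec n x \<bullet> vec n x"
  unfolding sq_norm_def scalar_prod_def by (simp add: lessThan_atLeast0)

lemma shifted_form_orthogonal_similar:
  fixes A B R :: "real mat"
  assumes A: "A \<in> carrier_mat n n" and B: "B \<in> carrier_mat n n" and R: "R \<in> carrier_mat n n"
    and RTR: "R\<^sup>T * R = 1\<^sub>m n" and RBR: "R\<^sup>T * B * R = A"
  shows "shifted_form s t n A x = shifted_form s t n B (\<lambda>i. (R *\<^sub>v vec n x) $ i)"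
proof -
  define X where "X = vec n x"
  have X: "X \<in> carrier_vec n" unfolding X_def by simp
  have RX: "vec n (\<lambda>i. (R *\<^sub>v X) $ i) = R *\<^sub>v X" using R by (intro eq_vecI) auto
  have adj: "(R *\<^sub>v X) \<bullet> (M *\<^sub>v (R *\<^sub>v X)) = X \<bullet> ((R\<^sup>T * M * R) *\<^sub>v X)"
    if M: "M \<in> carrier_mat n n" for M
  proof -
    have "(R *\<^sub>v X) \<bullet> (M *\<^sub>v (R *\<^sub>v X)) = X \<bullet> (R\<^sup>T *\<^sub>v (M *\<^sub>v (R *\<^sub>v X)))"
      using transpose_vec_mult_scalar[OF R X, of "M *\<^sub>v (R *\<^sub>v X)"] R M X
      by (simp add: comm_scalar_prod[of _ n])
    also have "R\<^sup>T *\<^sub>v (M *\<^sub>v (R *\<^sub>v X)) = (R\<^sup>T * M * R) *\<^sub>v X"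
      using R M X by (simp add: assoc_mult_mat_vec[of _ n n _ n])
    finally show ?thesis .
  qed
  have "quad_form n B (\<lambda>i. (R *\<^sub>v X) $ i) = X \<bullet> (A *\<^sub>v X)"
    unfolding quad_form_vec[OF B] RX adj[OF B] RBR ..
  moreover have "sq_norm n (\<lambda>i. (R *\<^sub>v X) $ i) = X \<bullet> X"
    unfolding sq_norm_vec RX using adj[OF one_carrier_mat] RTR R X by simp
  ultimately show ?thesis
    unfolding shifted_form_def quad_form_vec[OF A] sq_norm_vec X_def by simp
qed

lemma pos_on_span_orthogonal_similar:
  fixes A B R :: "real mat"
  assumes A: "A \<in> carrier_mat n n" and B: "B \<in> carrier_mat n n" and R: "R \<in> carrier_mat n n"
    and RTR: "R\<^sup>T * R = 1\<^sub>m n" and RBR: "R\<^sup>T * B * R = A"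
    and pos: "pos_on_span s t n A k u"
  shows "pos_on_span s t n B k (\<lambda>j i. (R *\<^sub>v vec n (u j)) $ i)"
  unfolding pos_on_span_def
proof (intro allI impI)
  fix c :: "nat \<Rightarrow> real" assume c: "\<exists>j<k. c j \<noteq> 0"
  have "(R *\<^sub>v vec n (lin_comb k u c)) $ i = lin_comb k (\<lambda>j i. (R *\<^sub>v vec n (u j)) $ i) c i"
    if "i < n" for i
    using R that
    by (simp add: lin_comb_def scalar_prod_def sum_distrib_left sum_distrib_right ac_simps)
      (rule sum.swap)
  then have "shifted_form s t n B (lin_comb k (\<lambda>j i. (R *\<^sub>v vec n (u j)) $ i) c)
      = shifted_form s t n A (lin_comb k u c)"
    unfolding shifted_form_orthogonal_similar[OF A B R RTR RBR] by (intro shifted_form_cong) simp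
  then show "0 < shifted_form s t n B (lin_comb k (\<lambda>j i. (R *\<^sub>v vec n (u j)) $ i) c)"
    using pos c unfolding pos_on_span_def by simp
qed

lemma cospectral_pos_on_span:
  fixes A B :: "real mat"
  assumes "A \<in> carrier_mat n n" and "B \<in> carrier_mat n n"
    and "A\<^sup>T = A" and "B\<^sup>T = B" and "char_poly A = char_poly B"
    and "pos_on_span s t n A k u"
  shows "\<exists>v. pos_on_span s t n B k v"
proof -
  obtain R where "R \<in> carrier_mat n n" "R\<^sup>T * R = 1\<^sub>m n" "R\<^sup>T * B * R = A"
    using cospectral_symmetric_orthogonally_similar[OF assms(1-5)] by blast
  then show ?thesis using pos_on_span_orthogonal_similar[OF assms(1,2)] assms(6) by blast
qed

section \<open>Distance matrices of induced subgraphs of diameter 2\<close>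

lemma has_walk_Suc_right: "has_walk E (Suc k) u v \<longleftrightarrow> (\<exists>w. has_walk E k u w \<and> E w v)"
  by (induction k arbitrary: u) auto

lemma has_walk_sym:
  assumes sym: "\<And>a b. E a b \<Longrightarrow> E b a"
  shows "has_walk E k u v \<Longrightarrow> has_walk E k v u"
proof (induction k arbitrary: u v)
  case (Suc k)
  then obtain w where "E u w" and "has_walk E k w v" by auto
  then show ?case using Suc.IH sym unfolding has_walk_Suc_right by blast
qed simp

lemma gdist_sym:
  assumes "\<And>a b. E a b \<Longrightarrow> E b a"
  shows "gdist E u v = gdist E v u"
proof -
  have "has_walk E k u v \<longleftrightarrow> has_walk E k v u" for k using has_walk_sym[where E = E] assms by blast
  then show ?thesis unfolding gdist_def by simp
qed

lemma gdist_self: "gdist E u u = 0"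
  unfolding gdist_def by (rule Least_equality) auto

lemma gdist_adjacent:
  assumes "u \<noteq> v" and "E u v"
  shows "gdist E u v = 1"
  unfolding gdist_def
proof (rule Least_equality)
  show "has_walk E 1 u v" using assms by simp
  show "1 \<le> k" if "has_walk E k u v" for k using that assms by (cases k) auto
qed

lemma gdist_common_neighbour:
  assumes "u \<noteq> v" and "\<not> E u v" and "E u w" and "E w v"
  shows "gdist E u v = 2"
  unfolding gdist_def
proof (rule Least_equality)
  show "has_walk E 2 u v" using assms by (auto simp: numeral_2_eq_2)
  show "2 \<le> k" if "has_walk E k u v" for k
    using that assms by (cases k; cases "k - 1") (auto simp: numeral_2_eq_2)
qed

lemma dist_matrix_carrier: "dist_matrix n E \<in> carrier_mat n n"
  unfolding dist_matrix_def by simp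

lemma dist_matrix_symmetric: "(\<And>a b. E a b \<Longrightarrow> E b a) \<Longrightarrow> (dist_matrix n E)\<^sup>T = dist_matrix n E"
  by (rule eq_matI) (auto simp: dist_matrix_def gdist_sym)

lemma gdist_le_2:
  assumes "u \<noteq> v \<Longrightarrow> \<not> E u v \<Longrightarrow> \<exists>w. E u w \<and> E w v"
  shows "gdist E u v = (if u = v then 0 else if E u v then 1 else 2)"
proof -
  consider "u = v" | "u \<noteq> v" "E u v" | "u \<noteq> v" "\<not> E u v" by blast
  then show ?thesis
  proof cases
    case 3
    with assms obtain w where "E u w" "E w v" by blast
    with 3 show ?thesis by (simp add: gdist_common_neighbour)
  qed (simp_all add: gdist_self gdist_adjacent)
qed

definition diam_le_2 :: "nat \<Rightarrow> (nat \<Rightarrow> nat \<Rightarrow> bool) \<Rightarrow> bool" where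
  "diam_le_2 m H \<longleftrightarrow> (\<forall>p<m. \<forall>q<m. p \<noteq> q \<longrightarrow> \<not> H p q \<longrightarrow> (\<exists>r<m. H p r \<and> H r q))"

lemma dist_matrix_diam_le_2:
  assumes "diam_le_2 m H"
  shows "dist_matrix m H = mat m m (\<lambda>(p, q). if p = q then 0 else if H p q then 1 else 2)"
proof -
  have "gdist H p q = (if p = q then 0 else if H p q then 1 else 2)" if "p < m" "q < m" for p q
    using assms that unfolding diam_le_2_def by (intro gdist_le_2) blast
  then show ?thesis by (intro eq_matI) (auto simp: dist_matrix_def)
qed

text \<open>Since \<open>H\<close> has diameter at most 2, distances in \<open>H\<close> are witnessed inside the copy in \<open>G\<close>,
  so \<open>D(H)\<close> is a principal submatrix of \<open>D(G)\<close>.\<close>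
lemma induced_dist_matrix:
  assumes inj: "inj_on f {..<m}" and img: "f ` {..<m} \<subseteq> {..<n}"
    and iso: "\<forall>i<m. \<forall>j<m. E (f i) (f j) \<longleftrightarrow> H i j" and diam: "diam_le_2 m H"
    and p: "p < m" and q: "q < m"
  shows "dist_matrix n E $$ (f p, f q) = dist_matrix m H $$ (p, q)"
proof -
  have fpq: "f p = f q \<longleftrightarrow> p = q" using inj p q by (auto simp: inj_on_def)
  have Epq: "E (f p) (f q) \<longleftrightarrow> H p q" using iso p q by blast
  have "gdist E (f p) (f q) = (if p = q then 0 else if H p q then 1 else 2)"
  proof (subst gdist_le_2)
    assume "f p \<noteq> f q" "\<not> E (f p) (f q)"
    then have "p \<noteq> q" "\<not> H p q" using fpq Epq by simp_all
    then obtain r where r: "r < m" "H p r" "H r q" using diam p q unfolding diam_le_2_def by blast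
    have "E (f p) (f r)" "E (f r) (f q)" using iso[rule_format, OF p r(1)] iso[rule_format, OF r(1) q] r
      by simp_all
    then show "\<exists>w. E (f p) w \<and> E w (f q)" by blast
  qed (simp add: fpq Epq)
  moreover have "f p < n" "f q < n" using img p q by auto
  ultimately show ?thesis unfolding dist_matrix_diam_le_2[OF diam] using p q by (simp add: dist_matrix_def)
qed

definition pushforward :: "nat \<Rightarrow> (nat \<Rightarrow> nat) \<Rightarrow> (nat \<Rightarrow> real) \<Rightarrow> nat \<Rightarrow> real" where
  "pushforward m f z j = (\<Sum>p<m. if f p = j then z p else 0)"

lemma pushforward_at:
  assumes inj: "inj_on f {..<m}" and q: "q < m"
  shows "pushforward m f z (f q) = z q"
proof -
  have "pushforward m f z (f q) = (\<Sum>p<m. if p = q then z p else 0)"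
    unfolding pushforward_def using inj q by (intro sum.cong) (auto simp: inj_on_def)
  then show ?thesis using q by simp
qed

lemma pushforward_sum:
  assumes inj: "inj_on f {..<m}" and img: "f ` {..<m} \<subseteq> {..<n}"
  shows "(\<Sum>j<n. g j * pushforward m f z j) = (\<Sum>q<m. g (f q) * z q)"
proof -
  have "(\<Sum>j<n. g j * pushforward m f z j) = (\<Sum>j\<in>f ` {..<m}. g j * pushforward m f z j)"
    using img by (intro sum.mono_neutral_right) (auto simp: pushforward_def intro!: sum.neutral)
  also have "\<dots> = (\<Sum>q<m. g (f q) * z q)" by (simp add: sum.reindex[OF inj] pushforward_at[OF inj])
  finally show ?thesis .
qed

lemma shifted_form_pushforward:
  assumes inj: "inj_on f {..<m}" and img: "f ` {..<m} \<subseteq> {..<n}"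
    and sub: "\<And>p q. p < m \<Longrightarrow> q < m \<Longrightarrow> N $$ (p, q) = M $$ (f p, f q)"
  shows "shifted_form s t n M (pushforward m f z) = shifted_form s t m N z"
proof -
  note push = pushforward_sum[OF inj img]
  have "quad_form n M (pushforward m f z) = (\<Sum>i<n. (\<Sum>j<n. M $$ (i, j) * pushforward m f z j) * pushforward m f z i)"
    unfolding quad_form_def by (simp add: sum_distrib_left sum_distrib_right ac_simps)
  also have "\<dots> = (\<Sum>p<m. (\<Sum>q<m. M $$ (f p, f q) * z q) * z p)"
    by (simp add: push)
  also have "\<dots> = quad_form m N z"
    unfolding quad_form_def by (simp add: sub sum_distrib_left sum_distrib_right ac_simps)
  finally have "quad_form n M (pushforward m f z) = quad_form m N z" .
  moreover have "sq_norm n (pushforward m f z) = sq_norm m z"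
    using push[of "pushforward m f z"] pushforward_at[OF inj] unfolding sq_norm_def by simp
  ultimately show ?thesis unfolding shifted_form_def by simp
qed

lemma pos_on_span_pushforward:
  assumes "inj_on f {..<m}" and "f ` {..<m} \<subseteq> {..<n}"
    and "\<And>p q. p < m \<Longrightarrow> q < m \<Longrightarrow> N $$ (p, q) = M $$ (f p, f q)"
    and "pos_on_span s t m N k u"
  shows "pos_on_span s t n M k (\<lambda>j. pushforward m f (u j))"
proof -
  have "lin_comb k (\<lambda>j. pushforward m f (u j)) c = pushforward m f (lin_comb k u c)" for c
  proof (rule ext)
    fix i
    have "lin_comb k (\<lambda>j. pushforward m f (u j)) c i
        = (\<Sum>j<k. \<Sum>p<m. c j * (if f p = i then u j p else 0))"
      unfolding lin_comb_def pushforward_def by (simp add: sum_distrib_left)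
    also have "\<dots> = (\<Sum>p<m. \<Sum>j<k. c j * (if f p = i then u j p else 0))" by (rule sum.swap)
    also have "\<dots> = pushforward m f (lin_comb k u c) i"
      unfolding lin_comb_def pushforward_def by (intro sum.cong refl) auto
    finally show "lin_comb k (\<lambda>j. pushforward m f (u j)) c i = pushforward m f (lin_comb k u c) i" .
  qed
  then show ?thesis using assms shifted_form_pushforward[OF assms(1-3)] unfolding pos_on_span_def by simp
qed

lemma induced_pos_on_span:
  assumes "has_induced n E m H" and "diam_le_2 m H"
    and "pos_on_span s t m (dist_matrix m H) k u"
  shows "\<exists>v. pos_on_span s t n (dist_matrix n E) k v"
proof -
  obtain f where inj: "inj_on f {..<m}" and img: "f ` {..<m} \<subseteq> {..<n}"
    and iso: "\<forall>i<m. \<forall>j<m. E (f i) (f j) \<longleftrightarrow> H i j"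
    using assms(1) unfolding has_induced_def by blast
  have "pos_on_span s t n (dist_matrix n E) k (\<lambda>j. pushforward m f (u j))"
    using induced_dist_matrix[OF inj img iso assms(2)]
    by (intro pos_on_span_pushforward[OF inj img _ assms(3)]) simp
  then show ?thesis by blast
qed

lemma not_has_induced_if_cospectral:
  assumes simple: "simple_graph n E" and symF: "\<And>a b. F a b \<Longrightarrow> F b a"
    and cosp: "D_cospectral n E n F" and diam: "diam_le_2 m H"
    and pos: "pos_on_span s t m (dist_matrix m H) k u"
    and nonpos: "nonpos_on_kernel s t n (dist_matrix n F) l w" and "l < k"
  shows "\<not> has_induced n E m H"
proof
  assume "has_induced n E m H"
  then obtain v where "pos_on_span s t n (dist_matrix n E) k v"
    using induced_pos_on_span diam pos by blast
  moreover have "(dist_matrix n E)\<^sup>T = dist_matrix n E"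
    using simple unfolding simple_graph_def by (intro dist_matrix_symmetric) blast
  ultimately obtain v' where "pos_on_span s t n (dist_matrix n F) k v'"
    using cospectral_pos_on_span[OF dist_matrix_carrier dist_matrix_carrier _
        dist_matrix_symmetric[OF symF] cosp[unfolded D_cospectral_def]]
    by blast
  then show False using pos_on_span_nonpos_on_kernel_contra nonpos \<open>l < k\<close> by blast
qed

section \<open>The distance matrix of \<open>K\<^sup>h\<^sub>n\<close>\<close>

lemma sum_lessThan_split: "(h :: nat) \<le> n \<Longrightarrow> (\<Sum>i<n. g i) = (\<Sum>i<h. g i) + (\<Sum>i=h..<n. g i)"
  using sum.atLeastLessThan_concat[of 0 h n g] by (simp add: atLeast0LessThan)

lemma sum_lessThan_indicator:
  fixes g :: "nat \<Rightarrow> real"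
  assumes "h \<le> n"
  shows "(\<Sum>i<n. (if i < h then 1 else 0) * g i) = (\<Sum>i<h. g i)"
    and "(\<Sum>i<n. (if h \<le> i then 1 else 0) * g i) = (\<Sum>i=h..<n. g i)"
  by (simp_all add: sum_lessThan_split[OF assms])

lemma Khn_diam_le_2: "0 < h \<Longrightarrow> diam_le_2 n (Khn h n)"
  unfolding diam_le_2_def by (intro allI impI exI[of _ 0]) (auto simp: Khn_def)

lemma Khn_sym: "Khn h n a b \<Longrightarrow> Khn h n b a"
  unfolding Khn_def by auto

lemma quad_form_Khn:
  fixes x :: "nat \<Rightarrow> real"
  assumes h: "0 < h" and hn: "h \<le> n"
  shows "quad_form n (dist_matrix n (Khn h n)) x =
    2 * (\<Sum>i<n. x i)\<^sup>2 - (\<Sum>i<h. x i)\<^sup>2 - 2 * x 0 * (\<Sum>i=h..<n. x i)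
    + (\<Sum>i<h. x i * x i) - 2 * sq_norm n x"
proof -
  define \<chi> :: "nat \<Rightarrow> real" where "\<chi> i = (if i < h then 1 else 0)" for i
  define z :: "nat \<Rightarrow> real" where "z i = (if h \<le> i then 1 else 0)" for i
  define e :: "nat \<Rightarrow> real" where "e i = (if i = 0 then 1 else 0)" for i
  have entry: "dist_matrix n (Khn h n) $$ (i, j) =
      2 - \<chi> i * \<chi> j - e i * z j - z i * e j + (if i = j then \<chi> i - 2 else 0)"
    if "i < n" "j < n" for i j
    using that h unfolding dist_matrix_diam_le_2[OF Khn_diam_le_2[OF h]] \<chi>_def z_def e_def Khn_def
    by auto
  have "quad_form n (dist_matrix n (Khn h n)) x = (\<Sum>i<n. \<Sum>j<n. (2 * x i) * x j
      - (\<chi> i * x i) * (\<chi> j * x j) - (e i * x i) * (z j * x j) - (z i * x i) * (e j * x j)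
      + (if i = j then (\<chi> i - 2) * (x i * x i) else 0))"
    unfolding quad_form_def by (intro sum.cong refl) (auto simp: entry algebra_simps)
  also have "\<dots> = (\<Sum>i<n. 2 * x i) * (\<Sum>i<n. x i) - (\<Sum>i<n. \<chi> i * x i) * (\<Sum>i<n. \<chi> i * x i)
      - (\<Sum>i<n. e i * x i) * (\<Sum>i<n. z i * x i) - (\<Sum>i<n. z i * x i) * (\<Sum>i<n. e i * x i)
      + (\<Sum>i<n. (\<chi> i - 2) * (x i * x i))"
    by (simp only: sum.distrib sum_subtractf sum_product) simp
  also have "(\<Sum>i<n. e i * x i) = x 0"
    using h hn by (simp add: e_def if_distrib[of "\<lambda>c. c * _"] cong: if_cong)
  finally show ?thesis
    using sum_lessThan_indicator[OF hn] h
    by (simp add: \<chi>_def z_def sq_norm_def power2_eq_square left_diff_distrib sum_subtractf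
      sum_distrib_left[symmetric])
qed

lemma Khn_second_eigenvalue_le:
  assumes h: "0 < h" and hn: "h \<le> n"
  shows "nonpos_on_kernel 1 (-1/2) n (dist_matrix n (Khn h n)) 1 (\<lambda>_ j. if j = 0 then 1 else 2)"
  unfolding nonpos_on_kernel_def
proof (intro allI impI)
  fix x :: "nat \<Rightarrow> real"
  assume "\<forall>i<(1::nat). (\<Sum>j<n. (if j = 0 then 1 else 2) * x j) = 0"
  then have ker: "(\<Sum>j<n. (if j = 0 then 1 else 2) * x j) = 0" by simp
  define a b TK TZ where "a = (\<Sum>i<h. x i)" and "b = (\<Sum>i=h..<n. x i)"
    and "TK = (\<Sum>i<h. x i * x i)" and "TZ = (\<Sum>i=h..<n. x i * x i)"
  have S: "(\<Sum>i<n. x i) = a + b" and T: "sq_norm n x = TK + TZ"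
    unfolding a_def b_def TK_def TZ_def sq_norm_def by (simp_all add: sum_lessThan_split[OF hn])
  have "(\<Sum>j<n. (if j = 0 then 1 else 2) * x j) = (\<Sum>j<n. 2 * x j - (if j = 0 then x j else 0))"
    by (intro sum.cong) auto
  also have "\<dots> = 2 * (a + b) - x 0" using h hn by (simp add: sum_subtractf sum_distrib_left[symmetric] S)
  finally have x0: "x 0 = 2 * (a + b)" using ker by simp
  have "x 0 * x 0 \<le> TK" unfolding TK_def using h by (intro member_le_sum) auto
  moreover have "0 \<le> TZ" unfolding TZ_def by (intro sum_nonneg) simp
  moreover have "2 * shifted_form 1 (-1/2) n (dist_matrix n (Khn h n)) x
      = - 2 * (a + 2 * b)\<^sup>2 - 3 * TZ - (TK - x 0 * x 0)"
    unfolding shifted_form_def quad_form_Khn[OF h hn] S T a_def[symmetric] b_def[symmetric]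
      TK_def[symmetric] x0 by (simp add: power2_eq_square algebra_simps)
  moreover have "0 \<le> (a + 2 * b)\<^sup>2" by simp
  ultimately show "shifted_form 1 (-1/2) n (dist_matrix n (Khn h n)) x \<le> 0" by linarith
qed

lemma Khn_third_eigenvalue_le:
  assumes h: "0 < h" and hn: "h \<le> n"
  shows "nonpos_on_kernel 1 (-1) n (dist_matrix n (Khn h n)) 2
    (\<lambda>i j. if i = 0 then (if j < h then 1 else 0) else (if h \<le> j then 1 else 0))"
  unfolding nonpos_on_kernel_def
proof (intro allI impI)
  fix x :: "nat \<Rightarrow> real"
  assume "\<forall>i<(2::nat). (\<Sum>j<n. (if i = 0 then (if j < h then 1 else 0) else (if h \<le> j then 1 else 0)) * x j) = 0"
  then have "(\<Sum>j<n. (if j < h then 1 else 0) * x j) = 0" "(\<Sum>j<n. (if h \<le> j then 1 else 0) * x j) = 0"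
    by (auto dest: spec[of _ 0] spec[of _ 1])
  then have a: "(\<Sum>i<h. x i) = 0" and b: "(\<Sum>i=h..<n. x i) = 0"
    by (simp_all add: sum_lessThan_indicator[OF hn])
  have "0 \<le> (\<Sum>i=h..<n. x i * x i)" by (intro sum_nonneg) simp
  then show "shifted_form 1 (-1) n (dist_matrix n (Khn h n)) x \<le> 0"
    unfolding shifted_form_def quad_form_Khn[OF h hn] sum_lessThan_split[OF hn, of x] a b
    by (simp add: sq_norm_def sum_lessThan_split[OF hn])
qed

lemma Khn_second_smallest_eigenvalue_ge:
  assumes h: "0 < h" and hn: "h \<le> n"
  shows "nonpos_on_kernel (-1) (-2) n (dist_matrix n (Khn h n)) 1 (\<lambda>_ j. if h \<le> j then 1 else 0)"
  unfolding nonpos_on_kernel_def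
proof (intro allI impI)
  fix x :: "nat \<Rightarrow> real"
  assume "\<forall>i<(1::nat). (\<Sum>j<n. (if h \<le> j then 1 else 0) * x j) = 0"
  then have b: "(\<Sum>i=h..<n. x i) = 0" by (simp add: sum_lessThan_indicator[OF hn])
  have "shifted_form (-1) (-2) n (dist_matrix n (Khn h n)) x = - ((\<Sum>i<h. x i)\<^sup>2 + (\<Sum>i<h. x i * x i))"
    unfolding shifted_form_def quad_form_Khn[OF h hn] sum_lessThan_split[OF hn, of x] b by simp
  moreover have "0 \<le> (\<Sum>i<h. x i * x i)" by (intro sum_nonneg) simp
  moreover have "0 \<le> (\<Sum>i<h. x i)\<^sup>2" by simp
  ultimately show "shifted_form (-1) (-2) n (dist_matrix n (Khn h n)) x \<le> 0" by linarith
qed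

section \<open>The forbidden subgraphs\<close>

lemma pos_on_span_2I:
  assumes form: "\<And>c. shifted_form s t n M (lin_comb 2 u c) =
      a * (c 0)\<^sup>2 + 2 * b * c 0 * c 1 + d * (c 1)\<^sup>2"
    and a: "0 < a" and det: "b * b < a * d"
  shows "pos_on_span s t n M 2 u"
  unfolding pos_on_span_def form
proof (intro allI impI)
  fix c :: "nat \<Rightarrow> real" assume "\<exists>j<2. c j \<noteq> 0"
  then have c: "c 0 \<noteq> 0 \<or> c 1 \<noteq> 0" by (auto simp: less_2_cases_iff)
  have "0 < (a * c 0 + b * c 1)\<^sup>2 + (a * d - b * b) * (c 1)\<^sup>2"
  proof (cases "c 1 = 0")
    case True
    then show ?thesis using c a by simp
  next
    case False
    then have "0 < (a * d - b * b) * (c 1)\<^sup>2" using det by simp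
    then show ?thesis using zero_le_power2[of "a * c 0 + b * c 1"] by linarith
  qed
  also have "(a * c 0 + b * c 1)\<^sup>2 + (a * d - b * b) * (c 1)\<^sup>2
      = a * (a * (c 0)\<^sup>2 + 2 * b * c 0 * c 1 + d * (c 1)\<^sup>2)"
    by (simp add: power2_eq_square algebra_simps)
  finally show "0 < a * (c 0)\<^sup>2 + 2 * b * c 0 * c 1 + d * (c 1)\<^sup>2"
    using a by (simp add: zero_less_mult_iff)
qed

lemma pos_on_span_3I:
  assumes form: "\<And>c. shifted_form s t n M (lin_comb 3 u c) =
      a * (c 0 + \<alpha> * c 1 + \<beta> * c 2)\<^sup>2 + b * (c 1 + \<gamma> * c 2)\<^sup>2 + d * (c 2)\<^sup>2"
    and d: "0 < a" "0 < b" "0 < d"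
  shows "pos_on_span s t n M 3 u"
  unfolding pos_on_span_def form
proof (intro allI impI)
  fix c :: "nat \<Rightarrow> real" assume "\<exists>j<3. c j \<noteq> 0"
  then have c: "c 0 \<noteq> 0 \<or> c 1 \<noteq> 0 \<or> c 2 \<noteq> 0" by (auto simp: less_Suc_eq numeral_eq_Suc)
  have "0 < d * (c 2)\<^sup>2 \<or> 0 < b * (c 1 + \<gamma> * c 2)\<^sup>2 \<or> 0 < a * (c 0 + \<alpha> * c 1 + \<beta> * c 2)\<^sup>2"
  proof (cases "c 2 = 0")
    case True
    then show ?thesis using c d by (cases "c 1 = 0") auto
  qed (use d in simp)
  moreover have "0 \<le> a * (c 0 + \<alpha> * c 1 + \<beta> * c 2)\<^sup>2" "0 \<le> b * (c 1 + \<gamma> * c 2)\<^sup>2"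
    "0 \<le> d * (c 2)\<^sup>2" using d by simp_all
  ultimately show "0 < a * (c 0 + \<alpha> * c 1 + \<beta> * c 2)\<^sup>2 + b * (c 1 + \<gamma> * c 2)\<^sup>2 + d * (c 2)\<^sup>2"
    by linarith
qed

lemma forbidden_graphs_diam_le_2:
  "diam_le_2 4 C4" "diam_le_2 5 C5" "diam_le_2 5 H1" "diam_le_2 5 H4" "diam_le_2 5 H9"
  "diam_le_2 5 H10" "diam_le_2 6 H11" "diam_le_2 6 H12" "diam_le_2 6 H13"
  by (simp_all add: diam_le_2_def C4_def C5_def H1_def H4_def H9_def H10_def H11_def H12_def
      H13_def graph_of_edges_def eval_nat_numeral All_less_Suc Ex_less_Suc)

lemmas shifted_form_expand =
  shifted_form_def quad_form_def sq_norm_def lin_comb_def graph_of_edges_def eval_nat_numeral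
  power2_eq_square

lemma C4_pos_on_span:
  "pos_on_span 1 (-1/2) 4 (dist_matrix 4 C4) 2
    (\<lambda>j p. [[1, 1, 1, 1], [-1, 1, -1, 1]] ! j ! p)"
  unfolding dist_matrix_diam_le_2[OF forbidden_graphs_diam_le_2(1)]
  by (rule pos_on_span_2I[where a = 18 and b = 0 and d = 2])
    (simp_all add: C4_def shifted_form_expand algebra_simps)

lemma C5_pos_on_span:
  "pos_on_span 1 (-1/2) 5 (dist_matrix 5 C5) 2
    (\<lambda>j p. [[2, 2, 2, 2, 2], [0, -1, 2, -2, 1]] ! j ! p)"
  unfolding dist_matrix_diam_le_2[OF forbidden_graphs_diam_le_2(2)]
  by (rule pos_on_span_2I[where a = 130 and b = 0 and d = 1])
    (simp_all add: C5_def shifted_form_expand algebra_simps)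

lemma H1_pos_on_span:
  "pos_on_span 1 (-1/2) 5 (dist_matrix 5 H1) 2
    (\<lambda>j p. [[2, 2, 2, 2, 1], [1, -2, 2, -1, 0]] ! j ! p)"
  unfolding dist_matrix_diam_le_2[OF forbidden_graphs_diam_le_2(3)]
  by (rule pos_on_span_2I[where a = "193/2" and b = 0 and d = 1])
    (simp_all add: H1_def shifted_form_expand algebra_simps)

lemma H4_pos_on_span:
  "pos_on_span 1 (-1) 5 (dist_matrix 5 H4) 3
    (\<lambda>j p. [[2, 1, 2, 2, 2], [1, -2, 0, -2, 1], [-1, -2, 1, 2, -1]] ! j ! p)"
  unfolding dist_matrix_diam_le_2[OF forbidden_graphs_diam_le_2(4)]
  by (rule pos_on_span_3I[where a = 113 and \<alpha> = "-14/113" and \<beta> = "-7/113"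
        and b = "482/113" and \<gamma> = "-49/241" and d = "576/241"])
    (simp_all add: H4_def shifted_form_expand algebra_simps)

lemma H9_pos_on_span:
  "pos_on_span 1 (-1/2) 5 (dist_matrix 5 H9) 2
    (\<lambda>j p. [[1, 1, 1, 1, 1], [-1, -1, 1, -1, 1]] ! j ! p)"
  unfolding dist_matrix_diam_le_2[OF forbidden_graphs_diam_le_2(5)]
  by (rule pos_on_span_2I[where a = "49/2" and b = "-5/2" and d = "1/2"])
    (simp_all add: H9_def shifted_form_expand algebra_simps)

lemma H10_pos_on_span:
  "pos_on_span 1 (-1/2) 5 (dist_matrix 5 H10) 2
    (\<lambda>j p. [[1, 1, 1, 1, 1], [-1, -1, 0, 0, 0]] ! j ! p)"
  unfolding dist_matrix_diam_le_2[OF forbidden_graphs_diam_le_2(6)]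
  by (rule pos_on_span_2I[where a = "57/2" and b = "-9" and d = 3])
    (simp_all add: H10_def shifted_form_expand algebra_simps)

lemma H11_pos_on_span:
  "pos_on_span 1 (-1/2) 6 (dist_matrix 6 H11) 2
    (\<lambda>j p. [[2, 2, 2, 2, 2, 3], [-3, -3, 1, 1, 1, 2]] ! j ! p)"
  unfolding dist_matrix_diam_le_2[OF forbidden_graphs_diam_le_2(7)]
  by (rule pos_on_span_2I[where a = "381/2" and b = 8 and d = "1/2"])
    (simp_all add: H11_def shifted_form_expand algebra_simps)

lemma H12_pos_on_span:
  "pos_on_span 1 (-1/2) 6 (dist_matrix 6 H12) 2
    (\<lambda>j p. [[1, 1, 1, 1, 1, 1], [-1, -1, 0, 0, 0, 0]] ! j ! p)"
  unfolding dist_matrix_diam_le_2[OF forbidden_graphs_diam_le_2(8)]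
  by (rule pos_on_span_2I[where a = 41 and b = "-11" and d = 3])
    (simp_all add: H12_def shifted_form_expand algebra_simps)

lemma H13_pos_on_span:
  "pos_on_span (-1) (-2) 6 (dist_matrix 6 H13) 2
    (\<lambda>j p. [[0, -1, -1, 1, 1, 0], [0, -1, -1, -1, -1, 3]] ! j ! p)"
  unfolding dist_matrix_diam_le_2[OF forbidden_graphs_diam_le_2(9)]
  by (rule pos_on_span_2I[where a = 4 and b = 0 and d = 2])
    (simp_all add: H13_def shifted_form_expand algebra_simps)

theorem lemma3p1:
  fixes n h :: nat and E :: "nat \<Rightarrow> nat \<Rightarrow> bool"
  assumes "3 \<le> h" and "h \<le> n - 1"
    and "simple_graph n E" and "connected_graph n E"
    and "D_cospectral n E n (Khn h n)"
  shows "\<not> has_induced n E 4 C4 \<and> \<not> has_induced n E 5 C5 \<and>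
         \<not> has_induced n E 5 H1 \<and> \<not> has_induced n E 5 H4 \<and>
         \<not> has_induced n E 5 H9 \<and> \<not> has_induced n E 5 H10 \<and>
         \<not> has_induced n E 6 H11 \<and> \<not> has_induced n E 6 H12 \<and>
         \<not> has_induced n E 6 H13"
proof -
  have h: "0 < h" and hn: "h \<le> n" using assms(1,2) by simp_all
  have excluded: "\<not> has_induced n E m H"
    if "diam_le_2 m H" and "pos_on_span s t m (dist_matrix m H) k u"
      and "nonpos_on_kernel s t n (dist_matrix n (Khn h n)) l w" and "l < k" for m H s t k u l w
    using not_has_induced_if_cospectral[OF assms(3) Khn_sym assms(5) that] .
  note diam = forbidden_graphs_diam_le_2
  note second = Khn_second_eigenvalue_le[OF h hn]
  note third = Khn_third_eigenvalue_le[OF h hn]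
  note penultimate = Khn_second_smallest_eigenvalue_ge[OF h hn]
  show ?thesis
    using excluded[OF diam(1) C4_pos_on_span second] excluded[OF diam(2) C5_pos_on_span second]
      excluded[OF diam(3) H1_pos_on_span second] excluded[OF diam(4) H4_pos_on_span third]
      excluded[OF diam(5) H9_pos_on_span second] excluded[OF diam(6) H10_pos_on_span second]
      excluded[OF diam(7) H11_pos_on_span second] excluded[OF diam(8) H12_pos_on_span second]
      excluded[OF diam(9) H13_pos_on_span penultimate]
    by simp
qed

end
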